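(* Let $\mathbf{a}\in\mathbb{C}^{2N}$ be an eigenvector of $\mathbf{D}$ with eigenvalue $\mu\in\mathbb{C}$. Then $\bm{\Gamma}\mathbf{a}^{*}$ is an eigenvector of $\mathbf{D}$ with eigenvalue $-\mu^{*}$. Furthermore, if $\mathbf{a},\mathbf{b}$ are eigenvectors of $\mathbf{D}$ and $\mathbf{a}'=\bm{\Gamma}\mathbf{a}^{*}$, $\mathbf{b}'=\bm{\Gamma}\mathbf{b}^{*}$, then $$\langle \mathbf{a},\mathbf{b}\rangle^{*}=-\langle \mathbf{a}',\mathbf{b}'\rangle,\qquad \langle \mathbf{a},\mathbf{b}'\rangle=-\langle \mathbf{b},\mathbf{a}'\rangle .$$
   Context: Fix an integer $N\ge 1$, real numbers $v$ with $|v|<1$, $L>0$, $L_{\star}\ge 0$, an integer $M\ge 1$ and real coefficients $c_{1}=1,c_{2},\dots,c_{M}$. Let $F(k)=\sum_{i=1}^{M}(-1)^{i-1}c_{i}L_{\star}^{2i-2}k^{2i-1}$ and $k_{n}=n\pi/L$, and assume $F(k_{n})^{2}\neq v^{2}k_{n}^{2}$ for $n=1,\dots,N$. Put $u_{n}=\sqrt{|F(k_{n})^{2}-v^{2}k_{n}^{2}|}/k_{n}>0$, and $\varepsilon_{n}=1$ if $F(k_{n})^{2}-v^{2}k_{n}^{2}>0$, $\varepsilon_{n}=0$ otherwise. Define $N\times N$ matrices $\bm\sigma,\bm\rho,\bm\xi$ by $\sigma_{nn}=0$, $\sigma_{nm}=\dfrac{2iv\sqrt{nm}\,[1-(-1)^{n+m}]}{\pi\sqrt{u_{n}u_{m}}\,(m^{2}-n^{2})}$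 for $n\neq m$, $\bm\rho=\mathrm{diag}(n u_{n}\varepsilon_{n})$, $\bm\xi=\mathrm{diag}(-n u_{n}(1-\varepsilon_{n}))$. With $\mathbf{I}$ the $N\times N$ identity, define the $2N\times 2N$ matrices $\bm{\Sigma}=\begin{pmatrix}\mathbf{I}&\mathbf{0}\\ \mathbf{0}&-\mathbf{I}\end{pmatrix}$, $\bm{\Gamma}=\begin{pmatrix}\mathbf{0}&\mathbf{I}\\ \mathbf{I}&\mathbf{0}\end{pmatrix}$, $\mathbf{R}=\bm{\Sigma}-\begin{pmatrix}\bm\sigma&\bm\sigma\\ \bm\sigma&\bm\sigma\end{pmatrix}$, $\bm{\Omega}=\begin{pmatrix}\bm\rho&\bm\xi\\ \bm\xi&\bm\rho\end{pmatrix}$. Standing assumption: $\mathbf{R}$ is invertible. Let $\mathbf{D}=\mathbf{R}^{-1}\bm{\Omega}$. Here ${}^{*}$ denotes entrywise complex conjugation, ${}^{\mathrm{H}}$ the conjugate transpose, and the $\mathbf{R}$-inner product is $\langle\mathbf{x},\mathbf{y}\rangle=\mathbf{x}^{\mathrm{H}}\mathbf{R}\mathbf{y}$. *)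

theory Defs
  imports "Jordan_Normal_Form.Char_Poly"
begin

definition Fdisp :: "nat \<Rightarrow> (nat \<Rightarrow> real) \<Rightarrow> real \<Rightarrow> real \<Rightarrow> real" where
  "Fdisp M c Ls k = (\<Sum>i = 1..M. (-1) ^ (i - 1) * c i * Ls ^ (2 * i - 2) * k ^ (2 * i - 1))"

definition kn :: "real \<Rightarrow> nat \<Rightarrow> real" where
  "kn L n = real n * pi / L"

definition disc :: "nat \<Rightarrow> (nat \<Rightarrow> real) \<Rightarrow> real \<Rightarrow> real \<Rightarrow> real \<Rightarrow> nat \<Rightarrow> real" where
  "disc M c Ls v L n = (Fdisp M c Ls (kn L n))\<^sup>2 - v\<^sup>2 * (kn L n)\<^sup>2"

definition uu :: "nat \<Rightarrow> (nat \<Rightarrow> real) \<Rightarrow> real \<Rightarrow> real \<Rightarrow> real \<Rightarrow> nat \<Rightarrow> real" where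
  "uu M c Ls v L n = sqrt \<bar>disc M c Ls v L n\<bar> / kn L n"

definition epsn :: "nat \<Rightarrow> (nat \<Rightarrow> real) \<Rightarrow> real \<Rightarrow> real \<Rightarrow> real \<Rightarrow> nat \<Rightarrow> real" where
  "epsn M c Ls v L n = (if disc M c Ls v L n > 0 then 1 else 0)"

text \<open>N x N matrices; the 0-based index i corresponds to the paper's index n = i+1.\<close>
definition sigma_mat :: "nat \<Rightarrow> nat \<Rightarrow> (nat \<Rightarrow> real) \<Rightarrow> real \<Rightarrow> real \<Rightarrow> real \<Rightarrow> complex mat" where
  "sigma_mat N M c Ls v L = mat N N (\<lambda>(i, j). let n = i + 1; m = j + 1 in
     if n = m then 0 else
     \<i> * complex_of_real (2 * v * sqrt (real n * real m) * (1 - (-1) ^ (n + m))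
        / (pi * sqrt (uu M c Ls v L n * uu M c Ls v L m) * (real m ^ 2 - real n ^ 2))))"

definition rho_mat :: "nat \<Rightarrow> nat \<Rightarrow> (nat \<Rightarrow> real) \<Rightarrow> real \<Rightarrow> real \<Rightarrow> real \<Rightarrow> complex mat" where
  "rho_mat N M c Ls v L = mat N N (\<lambda>(i, j). if i = j then
     complex_of_real (real (i + 1) * uu M c Ls v L (i + 1) * epsn M c Ls v L (i + 1)) else 0)"

definition xi_mat :: "nat \<Rightarrow> nat \<Rightarrow> (nat \<Rightarrow> real) \<Rightarrow> real \<Rightarrow> real \<Rightarrow> real \<Rightarrow> complex mat" where
  "xi_mat N M c Ls v L = mat N N (\<lambda>(i, j). if i = j then
     complex_of_real (- real (i + 1) * uu M c Ls v L (i + 1) * (1 - epsn M c Ls v L (i + 1))) else 0)"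

definition Sigma_mat :: "nat \<Rightarrow> complex mat" where
  "Sigma_mat N = four_block_mat (1\<^sub>m N) (0\<^sub>m N N) (0\<^sub>m N N) (- 1\<^sub>m N)"

definition Gamma_mat :: "nat \<Rightarrow> complex mat" where
  "Gamma_mat N = four_block_mat (0\<^sub>m N N) (1\<^sub>m N) (1\<^sub>m N) (0\<^sub>m N N)"

definition R_mat :: "nat \<Rightarrow> nat \<Rightarrow> (nat \<Rightarrow> real) \<Rightarrow> real \<Rightarrow> real \<Rightarrow> real \<Rightarrow> complex mat" where
  "R_mat N M c Ls v L = Sigma_mat N -
     (let S = sigma_mat N M c Ls v L in four_block_mat S S S S)"

definition Omega_mat :: "nat \<Rightarrow> nat \<Rightarrow> (nat \<Rightarrow> real) \<Rightarrow> real \<Rightarrow> real \<Rightarrow> real \<Rightarrow> complex mat" where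
  "Omega_mat N M c Ls v L =
     four_block_mat (rho_mat N M c Ls v L) (xi_mat N M c Ls v L) (xi_mat N M c Ls v L) (rho_mat N M c Ls v L)"

definition inv_mat :: "complex mat \<Rightarrow> complex mat" where
  "inv_mat A = (SOME B. inverts_mat A B \<and> inverts_mat B A)"

definition D_mat :: "nat \<Rightarrow> nat \<Rightarrow> (nat \<Rightarrow> real) \<Rightarrow> real \<Rightarrow> real \<Rightarrow> real \<Rightarrow> complex mat" where
  "D_mat N M c Ls v L = inv_mat (R_mat N M c Ls v L) * Omega_mat N M c Ls v L"

definition R_inner :: "complex mat \<Rightarrow> complex vec \<Rightarrow> complex vec \<Rightarrow> complex" where
  "R_inner R x y = conjugate x \<bullet> (R *\<^sub>v y)"

end

theory Submission
  imports Defs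
begin

text \<open>
  The eigenproblem \<open>D a = \<mu> a\<close> is the generalized one \<open>\<Omega> a = \<mu> R a\<close>. Here \<open>\<Omega>\<close> is real and
  commutes with \<open>\<Gamma>\<close>, and \<open>R\<^sup>* = -\<Gamma> R \<Gamma>\<close> because \<open>\<sigma>\<close> is purely imaginary, \<open>\<Gamma> \<Sigma> \<Gamma> = -\<Sigma>\<close> and the \<open>\<sigma>\<close>-block is \<open>\<Gamma>\<close>-invariant.
  Conjugating \<open>\<Omega> a = \<mu> R a\<close> and multiplying by the involution \<open>\<Gamma>\<close> gives
  \<open>\<Omega> a' = -\<mu>\<^sup>* R a'\<close>. The same identity for \<open>R\<close>, with \<open>\<Gamma>\<close> real and symmetric, gives
  \<open>\<langle>a',b'\<rangle> = -\<langle>a,b\<rangle>\<^sup>*\<close>; and \<open>\<langle>a,b'\<rangle> = a\<^sup>H (R \<Gamma>) b\<^sup>*\<close> is antisymmetric in \<open>a, b\<close>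
  because \<open>R \<Gamma>\<close> is an antisymmetric matrix, \<open>\<sigma>\<close> being antisymmetric.
\<close>

lemma conjugate_mult_mat_vec:
  fixes A :: "complex mat"
  assumes "A \<in> carrier_mat n m" "x \<in> carrier_vec m"
  shows "conjugate (A *\<^sub>v x) = map_mat cnj A *\<^sub>v conjugate x"
  using assms by (intro eq_vecI) (auto simp: scalar_prod_def cnj_sum)

lemma inv_mat_inverts:
  assumes "invertible_mat R" "R \<in> carrier_mat n n"
  shows "inv_mat R \<in> carrier_mat n n" "R * inv_mat R = 1\<^sub>m n" "inv_mat R * R = 1\<^sub>m n"
proof -
  have "\<exists>B. inverts_mat R B \<and> inverts_mat B R"
    using assms(1) unfolding invertible_mat_def by blast
  then have "inverts_mat R (inv_mat R) \<and> inverts_mat (inv_mat R) R"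
    unfolding inv_mat_def by (rule someI_ex)
  then have right: "R * inv_mat R = 1\<^sub>m n" and left: "inv_mat R * R = 1\<^sub>m (dim_row (inv_mat R))"
    using assms(2) unfolding inverts_mat_def by auto
  from left have "dim_row (inv_mat R) = n"
    using assms(2) by (metis carrier_matD(2) index_mult_mat(3) index_one_mat(3))
  moreover from right have "dim_col (inv_mat R) = n"
    by (metis index_mult_mat(3) index_one_mat(3))
  ultimately show "inv_mat R \<in> carrier_mat n n" "R * inv_mat R = 1\<^sub>m n" "inv_mat R * R = 1\<^sub>m n"
    using right left by auto
qed

lemma inv_mat_mult_eigen_iff:
  assumes "invertible_mat R" "R \<in> carrier_mat n n" "\<Omega> \<in> carrier_mat n n" "a \<in> carrier_vec n"
  shows "(inv_mat R * \<Omega>) *\<^sub>v a = \<mu> \<cdot>\<^sub>v a \<longleftrightarrow> \<Omega> *\<^sub>v a = \<mu> \<cdot>\<^sub>v (R *\<^sub>v a)"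
proof -
  note inv = inv_mat_inverts[OF assms(1,2)]
  have "\<Omega> *\<^sub>v a = R *\<^sub>v ((inv_mat R * \<Omega>) *\<^sub>v a)"
    using assms inv assoc_mult_mat_vec[of R n n "inv_mat R" n "\<Omega> *\<^sub>v a"] by simp
  moreover have "(inv_mat R * \<Omega>) *\<^sub>v a = inv_mat R *\<^sub>v (\<Omega> *\<^sub>v a)"
    using assms inv by simp
  moreover have "inv_mat R *\<^sub>v (R *\<^sub>v a) = a"
    using assms inv by (simp flip: assoc_mult_mat_vec[of "inv_mat R" n n R n a])
  ultimately show ?thesis
    using assms inv by (auto simp: mult_mat_vec)
qed

lemma generalized_eigen_reflection:
  fixes R \<Omega> G :: "complex mat"
  assumes carrier: "R \<in> carrier_mat n n" "\<Omega> \<in> carrier_mat n n" "G \<in> carrier_mat n n"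
    and involution: "G * G = 1\<^sub>m n"
    and R_conj: "map_mat cnj R = - (G * R * G)"
    and \<Omega>_real: "map_mat cnj \<Omega> = \<Omega>"
    and \<Omega>_comm: "\<Omega> * G = G * \<Omega>"
    and a: "a \<in> carrier_vec n" and eigen: "\<Omega> *\<^sub>v a = \<mu> \<cdot>\<^sub>v (R *\<^sub>v a)"
  shows "\<Omega> *\<^sub>v (G *\<^sub>v conjugate a) = (- cnj \<mu>) \<cdot>\<^sub>v (R *\<^sub>v (G *\<^sub>v conjugate a))"
proof -
  define x where "x = conjugate a"
  have x: "x \<in> carrier_vec n" using a unfolding x_def by simp
  have "\<Omega> *\<^sub>v x = conjugate (\<mu> \<cdot>\<^sub>v (R *\<^sub>v a))"
    using conjugate_mult_mat_vec[OF carrier(2) a] \<Omega>_real eigen by (simp add: x_def)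
  also have "\<dots> = cnj \<mu> \<cdot>\<^sub>v (map_mat cnj R *\<^sub>v x)"
    using conjugate_mult_mat_vec[OF carrier(1) a] by (simp add: conjugate_smult_vec x_def)
  also have "\<dots> = - cnj \<mu> \<cdot>\<^sub>v (G *\<^sub>v (R *\<^sub>v (G *\<^sub>v x)))"
    using carrier x assoc_mult_mat_vec[OF carrier(3) mult_carrier_mat[OF carrier(1,3)] x]
    unfolding R_conj by (intro eq_vecI) auto
  finally have "G *\<^sub>v (\<Omega> *\<^sub>v x) = - cnj \<mu> \<cdot>\<^sub>v ((G * G) *\<^sub>v (R *\<^sub>v (G *\<^sub>v x)))"
    using carrier x by (simp add: mult_mat_vec)
  moreover have "G *\<^sub>v (\<Omega> *\<^sub>v x) = \<Omega> *\<^sub>v (G *\<^sub>v x)"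
    using carrier x \<Omega>_comm by (simp flip: assoc_mult_mat_vec)
  ultimately show ?thesis
    using carrier x involution by (simp add: x_def)
qed

lemma eigenvector_reflection:
  fixes R \<Omega> G :: "complex mat"
  assumes "invertible_mat R"
    and carrier: "R \<in> carrier_mat n n" "\<Omega> \<in> carrier_mat n n" "G \<in> carrier_mat n n"
    and involution: "G * G = 1\<^sub>m n"
    and "map_mat cnj R = - (G * R * G)" "map_mat cnj \<Omega> = \<Omega>" "\<Omega> * G = G * \<Omega>"
    and eigen: "eigenvector (inv_mat R * \<Omega>) a \<mu>"
  shows "eigenvector (inv_mat R * \<Omega>) (G *\<^sub>v conjugate a) (- cnj \<mu>)"
proof -
  have "inv_mat R * \<Omega> \<in> carrier_mat n n"
    using inv_mat_inverts(1)[OF assms(1,2)] carrier(2) by (rule mult_carrier_mat)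
  then have a: "a \<in> carrier_vec n" "a \<noteq> 0\<^sub>v n" and "(inv_mat R * \<Omega>) *\<^sub>v a = \<mu> \<cdot>\<^sub>v a"
    and dim: "dim_row (inv_mat R * \<Omega>) = n"
    using eigen unfolding eigenvector_def by auto
  then have "\<Omega> *\<^sub>v a = \<mu> \<cdot>\<^sub>v (R *\<^sub>v a)"
    using inv_mat_mult_eigen_iff[OF assms(1) carrier(1,2)] by blast
  then have "\<Omega> *\<^sub>v (G *\<^sub>v conjugate a) = (- cnj \<mu>) \<cdot>\<^sub>v (R *\<^sub>v (G *\<^sub>v conjugate a))"
    using generalized_eigen_reflection[OF carrier involution assms(6-8) a(1)] by blast
  then have "(inv_mat R * \<Omega>) *\<^sub>v (G *\<^sub>v conjugate a) = (- cnj \<mu>) \<cdot>\<^sub>v (G *\<^sub>v conjugate a)"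
    using inv_mat_mult_eigen_iff[OF assms(1) carrier(1,2)] carrier(3) a(1) by simp
  moreover have "G *\<^sub>v conjugate a \<noteq> 0\<^sub>v n"
  proof
    assume "G *\<^sub>v conjugate a = 0\<^sub>v n"
    then have "G *\<^sub>v (G *\<^sub>v conjugate a) = 0\<^sub>v n"
      using carrier(3) by (intro eq_vecI) auto
    then have "conjugate a = 0\<^sub>v n"
      using involution assoc_mult_mat_vec[OF carrier(3) carrier(3), of "conjugate a"] a(1) by simp
    then show False using a(2) by simp
  qed
  ultimately show ?thesis
    unfolding eigenvector_def dim using carrier(3) a(1) by simp
qed

lemma R_inner_conj_reflection:
  fixes R G :: "complex mat"
  assumes carrier: "R \<in> carrier_mat n n" "G \<in> carrier_mat n n"
    and R_conj: "map_mat cnj R = - (G * R * G)"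
    and G_real: "map_mat cnj G = G" and G_symmetric: "transpose_mat G = G"
    and a: "a \<in> carrier_vec n" and b: "b \<in> carrier_vec n"
  shows "cnj (R_inner R a b) = - R_inner R (G *\<^sub>v conjugate a) (G *\<^sub>v conjugate b)"
proof -
  have conjugate_b: "conjugate b \<in> carrier_vec n" using b by simp
  have "R_inner R (G *\<^sub>v conjugate a) (G *\<^sub>v conjugate b)
      = (transpose_mat G *\<^sub>v a) \<bullet> ((R * G) *\<^sub>v conjugate b)"
    using conjugate_mult_mat_vec[OF carrier(2), of "conjugate a"] carrier a b G_real G_symmetric
    by (simp add: R_inner_def)
  also have "\<dots> = a \<bullet> ((G * R * G) *\<^sub>v conjugate b)"
    using carrier a b assoc_mult_mat_vec[OF carrier(2) mult_carrier_mat[OF carrier] conjugate_b]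
    by (simp add: transpose_vec_mult_scalar[of G n n])
  also have "\<dots> = - (a \<bullet> conjugate (R *\<^sub>v b))"
    using carrier a b conjugate_mult_mat_vec[OF carrier(1) b] by (simp add: R_conj)
  also have "\<dots> = - cnj (R_inner R a b)"
    using carrier a b conjugate_conjugate_sprod[of a n "R *\<^sub>v b"] by (simp add: R_inner_def)
  finally show ?thesis by simp
qed

lemma R_inner_reflection_antisym:
  fixes R G :: "complex mat"
  assumes carrier: "R \<in> carrier_mat n n" "G \<in> carrier_mat n n"
    and antisym: "transpose_mat (R * G) = - (R * G)"
    and a: "a \<in> carrier_vec n" and b: "b \<in> carrier_vec n"
  shows "R_inner R a (G *\<^sub>v conjugate b) = - R_inner R b (G *\<^sub>v conjugate a)"
proof -
  have "R_inner R a (G *\<^sub>v conjugate b) = (transpose_mat (R * G) *\<^sub>v conjugate a) \<bullet> conjugate b"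
    using carrier a b by (simp add: R_inner_def transpose_vec_mult_scalar[of "R * G" n n])
  also have "\<dots> = - (conjugate b \<bullet> ((R * G) *\<^sub>v conjugate a))"
    using carrier a b by (simp add: antisym comm_scalar_prod[of _ n])
  also have "\<dots> = - R_inner R b (G *\<^sub>v conjugate a)"
    using carrier a b by (simp add: R_inner_def)
  finally show ?thesis .
qed

definition swap_halves :: "nat \<Rightarrow> nat \<Rightarrow> nat" where
  "swap_halves N i = (if i < N then i + N else i - N)"

lemma swap_halves_less: "i < N + N \<Longrightarrow> swap_halves N i < N + N"
  unfolding swap_halves_def by auto

lemma swap_halves_swap_halves: "i < N + N \<Longrightarrow> swap_halves N (swap_halves N i) = i"
  unfolding swap_halves_def by auto

lemma swap_halves_mod: "i < N + N \<Longrightarrow> swap_halves N i mod N = i mod N"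
  unfolding swap_halves_def by (auto simp: le_mod_geq)

lemma Gamma_mat_eq:
  "Gamma_mat N = mat (N + N) (N + N) (\<lambda>(i, j). if j = swap_halves N i then 1 else 0)"
  unfolding Gamma_mat_def by (rule eq_matI) (auto simp: swap_halves_def)

lemma Gamma_mat_carrier: "Gamma_mat N \<in> carrier_mat (N + N) (N + N)"
  unfolding Gamma_mat_eq by simp

lemma Gamma_mult_mat_index:
  assumes "A \<in> carrier_mat (N + N) m" "i < N + N" "j < m"
  shows "(Gamma_mat N * A) $$ (i, j) = A $$ (swap_halves N i, j)"
proof -
  have "(Gamma_mat N * A) $$ (i, j)
      = (\<Sum>k\<in>{0..<N + N}. (if k = swap_halves N i then 1 else 0) * A $$ (k, j))"
    using assms unfolding Gamma_mat_eq by (simp add: scalar_prod_def)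
  also have "\<dots> = (\<Sum>k\<in>{0..<N + N}. if k = swap_halves N i then A $$ (k, j) else 0)"
    by (rule sum.cong) auto
  finally show ?thesis using swap_halves_less[OF assms(2)] by simp
qed

lemma mult_Gamma_mat_index:
  assumes "A \<in> carrier_mat m (N + N)" "i < m" "j < N + N"
  shows "(A * Gamma_mat N) $$ (i, j) = A $$ (i, swap_halves N j)"
proof -
  have "(A * Gamma_mat N) $$ (i, j)
      = (\<Sum>k\<in>{0..<N + N}. A $$ (i, k) * (if j = swap_halves N k then 1 else 0))"
    using assms unfolding Gamma_mat_eq by (simp add: scalar_prod_def)
  also have "\<dots> = (\<Sum>k\<in>{0..<N + N}. if k = swap_halves N j then A $$ (i, k) else 0)"
    by (rule sum.cong) (auto simp: swap_halves_swap_halves swap_halves_less assms(3))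
  finally show ?thesis using swap_halves_less[OF assms(3)] by simp
qed

lemma Gamma_mat_involution: "Gamma_mat N * Gamma_mat N = 1\<^sub>m (N + N)"
proof (rule eq_matI)
  fix i j assume "i < dim_row (1\<^sub>m (N + N) :: complex mat)" "j < dim_col (1\<^sub>m (N + N) :: complex mat)"
  then have ij: "i < N + N" "j < N + N" by auto
  then show "(Gamma_mat N * Gamma_mat N) $$ (i, j) = 1\<^sub>m (N + N) $$ (i, j)"
    by (simp add: Gamma_mult_mat_index[OF Gamma_mat_carrier] swap_halves_less)
      (auto simp: Gamma_mat_eq swap_halves_less swap_halves_swap_halves)
qed (use Gamma_mat_carrier in auto)

lemma Gamma_mat_symmetric: "transpose_mat (Gamma_mat N) = Gamma_mat N"
  unfolding Gamma_mat_eq by (rule eq_matI) (auto simp: swap_halves_def)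

lemma Gamma_mat_real: "map_mat cnj (Gamma_mat N) = Gamma_mat N"
  unfolding Gamma_mat_eq by (rule eq_matI) auto

definition sigma_coeff :: "nat \<Rightarrow> (nat \<Rightarrow> real) \<Rightarrow> real \<Rightarrow> real \<Rightarrow> real \<Rightarrow> nat \<Rightarrow> nat \<Rightarrow> real" where
  "sigma_coeff M c Ls v L n m = (if n = m then 0 else
     2 * v * sqrt (real n * real m) * (1 - (-1) ^ (n + m))
       / (pi * sqrt (uu M c Ls v L n * uu M c Ls v L m) * (real m ^ 2 - real n ^ 2)))"

lemma sigma_coeff_antisym: "sigma_coeff M c Ls v L m n = - sigma_coeff M c Ls v L n m"
proof (cases "m = n")
  case False
  have "sqrt (real m * real n) = sqrt (real n * real m)" "m + n = n + m"
    "sqrt (uu M c Ls v L m * uu M c Ls v L n) = sqrt (uu M c Ls v L n * uu M c Ls v L m)"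
    "real n ^ 2 - real m ^ 2 = - (real m ^ 2 - real n ^ 2)"
    by (simp_all add: ac_simps)
  with False show ?thesis
    unfolding sigma_coeff_def by (simp only: if_False mult_minus_right divide_minus_right) simp
qed (simp add: sigma_coeff_def)

lemma sigma_mat_index:
  "p < N \<Longrightarrow> q < N \<Longrightarrow>
    sigma_mat N M c Ls v L $$ (p, q) = \<i> * complex_of_real (sigma_coeff M c Ls v L (p + 1) (q + 1))"
  unfolding sigma_mat_def sigma_coeff_def by (simp add: Let_def)

lemma sigma_mat_antisym:
  "p < N \<Longrightarrow> q < N \<Longrightarrow> sigma_mat N M c Ls v L $$ (q, p) = - sigma_mat N M c Ls v L $$ (p, q)"
  by (simp add: sigma_mat_index sigma_coeff_antisym[of M c Ls v L "Suc q"])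

lemma sigma_mat_imaginary:
  "p < N \<Longrightarrow> q < N \<Longrightarrow> cnj (sigma_mat N M c Ls v L $$ (p, q)) = - sigma_mat N M c Ls v L $$ (p, q)"
  by (simp add: sigma_mat_index)

lemma sigma_mat_carrier: "sigma_mat N M c Ls v L \<in> carrier_mat N N"
  unfolding sigma_mat_def by simp

lemma R_mat_carrier: "R_mat N M c Ls v L \<in> carrier_mat (N + N) (N + N)"
  unfolding R_mat_def Sigma_mat_def Let_def
  by (intro minus_carrier_mat four_block_carrier_mat sigma_mat_carrier)

lemma R_mat_index:
  assumes "i < N + N" "j < N + N"
  shows "R_mat N M c Ls v L $$ (i, j)
    = (if i = j then if i < N then 1 else -1 else 0) - sigma_mat N M c Ls v L $$ (i mod N, j mod N)"
  using assms sigma_mat_carrier[of N M c Ls v L] unfolding R_mat_def Sigma_mat_def Let_def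
  by (cases "i < N"; cases "j < N") (auto simp: le_mod_geq)

lemma R_mat_conj_reflection:
  "map_mat cnj (R_mat N M c Ls v L) = - (Gamma_mat N * R_mat N M c Ls v L * Gamma_mat N)"
proof (rule eq_matI)
  fix i j assume "i < dim_row (- (Gamma_mat N * R_mat N M c Ls v L * Gamma_mat N))"
    "j < dim_col (- (Gamma_mat N * R_mat N M c Ls v L * Gamma_mat N))"
  then have ij: "i < N + N" "j < N + N"
    using Gamma_mat_carrier[of N] by auto
  have "(Gamma_mat N * R_mat N M c Ls v L * Gamma_mat N) $$ (i, j)
      = R_mat N M c Ls v L $$ (swap_halves N i, swap_halves N j)"
    by (simp only: mult_Gamma_mat_index[OF mult_carrier_mat[OF Gamma_mat_carrier R_mat_carrier] ij]
        Gamma_mult_mat_index[OF R_mat_carrier ij(1) swap_halves_less[OF ij(2)]])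
  also have "\<dots> = - cnj (R_mat N M c Ls v L $$ (i, j))"
    using ij sigma_mat_imaginary[of "i mod N" N "j mod N"]
    by (simp add: R_mat_index swap_halves_less swap_halves_mod) (auto simp: swap_halves_def)
  finally show "map_mat cnj (R_mat N M c Ls v L) $$ (i, j)
      = (- (Gamma_mat N * R_mat N M c Ls v L * Gamma_mat N)) $$ (i, j)"
    using ij R_mat_carrier[of N M c Ls v L] Gamma_mat_carrier[of N] by simp
qed (use R_mat_carrier[of N M c Ls v L] Gamma_mat_carrier[of N] in auto)

lemma R_mat_Gamma_antisym:
  "transpose_mat (R_mat N M c Ls v L * Gamma_mat N) = - (R_mat N M c Ls v L * Gamma_mat N)"
proof (rule eq_matI)
  have RG: "R_mat N M c Ls v L * Gamma_mat N \<in> carrier_mat (N + N) (N + N)"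
    using R_mat_carrier Gamma_mat_carrier by (rule mult_carrier_mat)
  fix i j assume "i < dim_row (- (R_mat N M c Ls v L * Gamma_mat N))"
    "j < dim_col (- (R_mat N M c Ls v L * Gamma_mat N))"
  then have ij: "i < N + N" "j < N + N" using RG by auto
  have "R_mat N M c Ls v L $$ (j, swap_halves N i) = - R_mat N M c Ls v L $$ (i, swap_halves N j)"
    using ij sigma_mat_antisym[of "i mod N" N "j mod N"]
    by (simp add: R_mat_index swap_halves_less swap_halves_mod) (auto simp: swap_halves_def)
  then show "transpose_mat (R_mat N M c Ls v L * Gamma_mat N) $$ (i, j)
      = (- (R_mat N M c Ls v L * Gamma_mat N)) $$ (i, j)"
    using ij RG
    by (simp add: mult_Gamma_mat_index[OF R_mat_carrier ij(2,1)] mult_Gamma_mat_index[OF R_mat_carrier ij]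
        del: index_mult_mat)
qed (use R_mat_carrier[of N M c Ls v L] Gamma_mat_carrier[of N] in auto)

lemma Omega_mat_carrier: "Omega_mat N M c Ls v L \<in> carrier_mat (N + N) (N + N)"
  unfolding Omega_mat_def by (rule four_block_carrier_mat) (simp_all add: rho_mat_def xi_mat_def)

lemma Omega_mat_real: "map_mat cnj (Omega_mat N M c Ls v L) = Omega_mat N M c Ls v L"
  using Omega_mat_carrier[of N M c Ls v L]
  by (intro eq_matI) (auto simp: Omega_mat_def rho_mat_def xi_mat_def)

lemma Omega_mat_Gamma_comm: "Omega_mat N M c Ls v L * Gamma_mat N = Gamma_mat N * Omega_mat N M c Ls v L"
proof (rule eq_matI)
  fix i j assume "i < dim_row (Gamma_mat N * Omega_mat N M c Ls v L)"
    "j < dim_col (Gamma_mat N * Omega_mat N M c Ls v L)"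
  then have ij: "i < N + N" "j < N + N"
    using Omega_mat_carrier[of N M c Ls v L] Gamma_mat_carrier[of N] by auto
  have "Omega_mat N M c Ls v L $$ (i, swap_halves N j) = Omega_mat N M c Ls v L $$ (swap_halves N i, j)"
    using ij unfolding Omega_mat_def
    by (cases "i < N"; cases "j < N") (simp_all add: swap_halves_def rho_mat_def xi_mat_def)
  then show "(Omega_mat N M c Ls v L * Gamma_mat N) $$ (i, j) = (Gamma_mat N * Omega_mat N M c Ls v L) $$ (i, j)"
    by (simp only: mult_Gamma_mat_index[OF Omega_mat_carrier ij]
        Gamma_mult_mat_index[OF Omega_mat_carrier ij])
qed (use Omega_mat_carrier[of N M c Ls v L] Gamma_mat_carrier[of N] in auto)

theorem lemma2:
  fixes N M :: nat and v L Ls :: real and c :: "nat \<Rightarrow> real"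
  assumes "N \<ge> 1" and "\<bar>v\<bar> < 1" and "L > 0" and "Ls \<ge> 0" and "M \<ge> 1" and "c 1 = 1"
    and "\<forall>n \<in> {1..N}. (Fdisp M c Ls (kn L n))\<^sup>2 \<noteq> v\<^sup>2 * (kn L n)\<^sup>2"
    and "invertible_mat (R_mat N M c Ls v L)"
  shows "(\<forall>a \<mu>. eigenvector (D_mat N M c Ls v L) a \<mu> \<longrightarrow>
            eigenvector (D_mat N M c Ls v L) (Gamma_mat N *\<^sub>v conjugate a) (- cnj \<mu>))
       \<and> (\<forall>a b \<mu> \<nu>. eigenvector (D_mat N M c Ls v L) a \<mu> \<longrightarrow> eigenvector (D_mat N M c Ls v L) b \<nu> \<longrightarrow>
            (let R = R_mat N M c Ls v L; a' = Gamma_mat N *\<^sub>v conjugate a; b' = Gamma_mat N *\<^sub>v conjugate b in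
              cnj (R_inner R a b) = - R_inner R a' b' \<and> R_inner R a b' = - R_inner R b a'))"
proof -
  let ?R = "R_mat N M c Ls v L" and ?G = "Gamma_mat N"
  have dim_D: "dim_row (D_mat N M c Ls v L) = N + N"
    using inv_mat_inverts(1)[OF assms(8) R_mat_carrier] by (simp add: D_mat_def)
  have "eigenvector (D_mat N M c Ls v L) (?G *\<^sub>v conjugate a) (- cnj \<mu>)"
    if "eigenvector (D_mat N M c Ls v L) a \<mu>" for a \<mu>
    using eigenvector_reflection[OF assms(8) R_mat_carrier Omega_mat_carrier Gamma_mat_carrier
        Gamma_mat_involution R_mat_conj_reflection Omega_mat_real Omega_mat_Gamma_comm] that
    unfolding D_mat_def by blast
  moreover have "cnj (R_inner ?R a b) = - R_inner ?R (?G *\<^sub>v conjugate a) (?G *\<^sub>v conjugate b)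
      \<and> R_inner ?R a (?G *\<^sub>v conjugate b) = - R_inner ?R b (?G *\<^sub>v conjugate a)"
    if "eigenvector (D_mat N M c Ls v L) a \<mu>" "eigenvector (D_mat N M c Ls v L) b \<nu>" for a b \<mu> \<nu>
  proof -
    have ab: "a \<in> carrier_vec (N + N)" "b \<in> carrier_vec (N + N)"
      using that dim_D unfolding eigenvector_def by auto
    show ?thesis
      using R_inner_conj_reflection[OF R_mat_carrier Gamma_mat_carrier R_mat_conj_reflection
          Gamma_mat_real Gamma_mat_symmetric ab]
        R_inner_reflection_antisym[OF R_mat_carrier Gamma_mat_carrier R_mat_Gamma_antisym ab]
      by (rule conjI)
  qed
  ultimately show ?thesis unfolding Let_def by blast
qed

end
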